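(* Let $q(x)=x^TAx+b^Tx+c$ be a bivariate quadratic function ($A\in\mathbb{R}^{2\times2}$ symmetric) and $P\subset\mathbb{R}^2$ a polytope, and let $\operatorname{conv}(q+I_P)=\min_j(r_j+I_{P_j})$ be its convex envelope written as a piecewise function over a polyhedral subdivision $P=\bigcup_jP_j$, each $r_j$ being affine, quadratic, or a rational function (quadratic polynomial divided by an affine function). Then the function $\max_j (r_j+I_{P_j})^*$ (which equals $[\operatorname{conv}(q+I_P)]^*$) admits a parabolic subdivision of $\mathbb{R}^2$.
   Context: $I_C$ is the indicator function of $C$. The conjugate is $g^*(s)=\sup_x(s^Tx-g(x))$; the convex envelope $\operatorname{conv} g$ is the largest lower semicontinuous convex minorant of $g$. A polyhedral subdivision of a convex set $R$ is a finite union of polyhedral sets whose pairwise intersections are empty, a vertex, or an edge. A parabola is a set $\{(u,v): au^2+buv+cv^2+du+ev+f=0\}$ with $(a,\dots,f)\neq0$ and $b^2-4ac=0$. A parabolic region is a finite intersection of sets $\{a_is_1^2+b_is_1s_2+c_is_2^2+d_is_1+e_is_2+f_i\le 0\}$ with $(a_i,\dots,f_i)\ne0$ and $b_i^2-4a_ic_i=0$. A function admits a parabolic subdivision of $\mathbb{R}^2$ if $\mathbb{R}^2$ is a finite union of parabolic regions with pairwise intersections empty or contained in a parabola, and the function is given by a single (quadratic or affine) expression on each region. *)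

theory Defs
  imports "HOL-Analysis.Analysis"
begin

type_synonym pt = "real ^ 2"

definition quad_fun :: "real^2^2 \<Rightarrow> pt \<Rightarrow> real \<Rightarrow> pt \<Rightarrow> real" where
  "quad_fun A b c x = x \<bullet> (A *v x) + b \<bullet> x + c"

definition ind :: "pt set \<Rightarrow> pt \<Rightarrow> ereal" where
  "ind C x = (if x \<in> C then 0 else \<infinity>)"

definition conjugate :: "(pt \<Rightarrow> ereal) \<Rightarrow> pt \<Rightarrow> ereal" where
  "conjugate g s = (SUP x. ereal (s \<bullet> x) - g x)"

definition epigraph :: "(pt \<Rightarrow> ereal) \<Rightarrow> (pt \<times> real) set" where
  "epigraph g = {(x, \<mu>). g x \<le> ereal \<mu>}"

definition ereal_convex_fun :: "(pt \<Rightarrow> ereal) \<Rightarrow> bool" where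
  "ereal_convex_fun g \<longleftrightarrow> convex (epigraph g)"

definition ereal_lsc_fun :: "(pt \<Rightarrow> ereal) \<Rightarrow> bool" where
  "ereal_lsc_fun g \<longleftrightarrow> closed (epigraph g)"

definition convex_envelope :: "(pt \<Rightarrow> ereal) \<Rightarrow> pt \<Rightarrow> ereal" where
  "convex_envelope g x =
     (SUP h \<in> {h. ereal_convex_fun h \<and> ereal_lsc_fun h \<and> (\<forall>y. h y \<le> g y)}. h x)"

definition polyhedral_subdivision :: "pt set \<Rightarrow> nat \<Rightarrow> (nat \<Rightarrow> pt set) \<Rightarrow> bool" where
  "polyhedral_subdivision R n Ps \<longleftrightarrow>
     R = (\<Union>j<n. Ps j) \<and> (\<forall>j<n. polyhedron (Ps j)) \<and>
     (\<forall>i<n. \<forall>j<n. i \<noteq> j \<longrightarrow>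
        Ps i \<inter> Ps j = {} \<or>
        (Ps i \<inter> Ps j face_of Ps i \<and> Ps i \<inter> Ps j face_of Ps j \<and> aff_dim (Ps i \<inter> Ps j) \<le> 1))"

definition affine_piece :: "pt set \<Rightarrow> (pt \<Rightarrow> real) \<Rightarrow> bool" where
  "affine_piece C r \<longleftrightarrow> (\<exists>b c. \<forall>x\<in>C. r x = b \<bullet> x + c)"

definition quadratic_piece :: "pt set \<Rightarrow> (pt \<Rightarrow> real) \<Rightarrow> bool" where
  "quadratic_piece C r \<longleftrightarrow> (\<exists>A b c. transpose A = A \<and> (\<forall>x\<in>C. r x = quad_fun A b c x))"

definition rational_piece :: "pt set \<Rightarrow> (pt \<Rightarrow> real) \<Rightarrow> bool" where
  "rational_piece C r \<longleftrightarrow>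
     (\<exists>A b c d e. transpose A = A \<and> (\<exists>x\<in>C. d \<bullet> x + e \<noteq> 0) \<and>
        (\<forall>x\<in>C. d \<bullet> x + e \<noteq> 0 \<longrightarrow> r x = quad_fun A b c x / (d \<bullet> x + e)))"

type_synonym coeffs = "real \<times> real \<times> real \<times> real \<times> real \<times> real"

definition conic_poly :: "coeffs \<Rightarrow> pt \<Rightarrow> real" where
  "conic_poly k s = (case k of (a, b, c, d, e, f) \<Rightarrow>
     a * (s$1)^2 + b * (s$1) * (s$2) + c * (s$2)^2 + d * (s$1) + e * (s$2) + f)"

definition parabolic_coeffs :: "coeffs \<Rightarrow> bool" where
  "parabolic_coeffs k \<longleftrightarrow> (case k of (a, b, c, d, e, f) \<Rightarrow>
     (a, b, c, d, e, f) \<noteq> (0, 0, 0, 0, 0, 0) \<and> b^2 - 4 * a * c = 0)"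

definition parabola :: "pt set \<Rightarrow> bool" where
  "parabola S \<longleftrightarrow> (\<exists>k. parabolic_coeffs k \<and> S = {s. conic_poly k s = 0})"

definition parabolic_region :: "pt set \<Rightarrow> bool" where
  "parabolic_region R \<longleftrightarrow>
     (\<exists>K. finite K \<and> (\<forall>k\<in>K. parabolic_coeffs k) \<and> R = {s. \<forall>k\<in>K. conic_poly k s \<le> 0})"

definition admits_parabolic_subdivision :: "(pt \<Rightarrow> ereal) \<Rightarrow> bool" where
  "admits_parabolic_subdivision F \<longleftrightarrow>
     (\<exists>\<R>. finite \<R> \<and> (\<forall>R\<in>\<R>. parabolic_region R) \<and> \<Union>\<R> = UNIV \<and>
        (\<forall>R1\<in>\<R>. \<forall>R2\<in>\<R>. R1 \<noteq> R2 \<longrightarrow>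
            R1 \<inter> R2 = {} \<or> (\<exists>S. parabola S \<and> R1 \<inter> R2 \<subseteq> S)) \<and>
        (\<forall>R\<in>\<R>. \<exists>M w k. \<forall>s\<in>R. F s = ereal (quad_fun M w k s)))"

end

theory Submission
  imports Defs
begin

(* Conjugation does not distinguish a function from its lower semicontinuous convex envelope,
   so the function in question is the conjugate of q + I_P, i.e. s \<mapsto> max over x in P of
   phi s x = s \<bullet> x - q x.
   Write P = conv V. The maximum is attained at a vertex, at the critical point of phi s on a
   segment between two vertices along which q is strictly convex, or at the critical point of
   phi s in the plane of three vertices on which q is strictly convex. The value of each such
   candidate is quadratic in s, and its critical point lies in its face under affine conditions
   on s. The difference of two candidate values has constant sign, or is an affine function
   plus a multiple of the square of an affine function, or is a product of two affine
   functions; so it changes sign only across finitely many parabolas (lines count as degenerate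
   parabolas). On each cell of the arrangement of all these curves the candidates are totally
   ordered and a single candidate realises the maximum, so the conjugate is quadratic there. *)

lemma inner_real2: "(x::real^2) \<bullet> y = x$1 * y$1 + x$2 * y$2"
  by (simp add: inner_vec_def sum_2)

lemma matrix_vector_mult_real2:
  "((M::real^2^2) *v x)$1 = M$1$1 * x$1 + M$1$2 * x$2"
  "(M *v x)$2 = M$2$1 * x$1 + M$2$2 * x$2"
  by (simp_all add: matrix_vector_mult_def sum_2)

definition cross2 :: "real^2 \<Rightarrow> real^2 \<Rightarrow> real" where
  "cross2 x y = x$1 * y$2 - x$2 * y$1"

lemma decompose_cross2:
  assumes "cross2 d2 d3 \<noteq> 0"
  shows "y = (cross2 y d3 / cross2 d2 d3) *\<^sub>R d2 + (cross2 d2 y / cross2 d2 d3) *\<^sub>R d3"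
proof -
  have "cross2 y d3 * d2$i + cross2 d2 y * d3$i = y$i * cross2 d2 d3" for i :: 2
    using exhaust_2[of i] by (auto simp: cross2_def algebra_simps)
  then show ?thesis
    using assms by (simp add: vec_eq_iff add_divide_distrib[symmetric] nonzero_eq_divide_eq)
qed

lemma parallel_cross2:
  assumes "cross2 d1 d2 = 0" and "d1 \<noteq> 0"
  shows "d2 = ((d2 \<bullet> d1) / (d1 \<bullet> d1)) *\<^sub>R d1"
proof -
  have "d1$1 * d2$2 = d1$2 * d2$1" using assms(1) unfolding cross2_def by simp
  then have "(d2 \<bullet> d1) * d1$i = d2$i * (d1 \<bullet> d1)" for i :: 2
    using exhaust_2[of i] by (auto simp: inner_real2 algebra_simps)
  then show ?thesis using assms(2) by (simp add: vec_eq_iff field_simps)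
qed

lemma quadratic_le_max_endpoints:
  fixes \<alpha> \<sigma> \<kappa> t :: real
  assumes "0 \<le> t" "t \<le> 1" and "\<not> (0 < \<kappa> \<and> 0 \<le> \<sigma> \<and> \<sigma> \<le> 2 * \<kappa>)"
  shows "\<alpha> + t * \<sigma> - t^2 * \<kappa> \<le> max \<alpha> (\<alpha> + \<sigma> - \<kappa>)"
proof -
  consider "\<kappa> \<le> 0" | "0 < \<kappa>" "\<sigma> < 0" | "0 < \<kappa>" "2 * \<kappa> < \<sigma>" using assms(3) by linarith
  then show ?thesis
  proof cases
    case 1
    \<comment> \<open>the quadratic is convex, so it lies below the chord\<close>
    have "0 \<le> \<kappa> * (t * (t - 1))" using 1 assms(1,2) by (simp add: mult_nonpos_nonpos mult_nonneg_nonpos)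
    then have "\<alpha> + t * \<sigma> - t^2 * \<kappa> \<le> (1 - t) * \<alpha> + t * (\<alpha> + \<sigma> - \<kappa>)"
      by (simp add: algebra_simps power2_eq_square)
    also have "\<dots> \<le> (1 - t) * max \<alpha> (\<alpha> + \<sigma> - \<kappa>) + t * max \<alpha> (\<alpha> + \<sigma> - \<kappa>)"
      using assms(1,2) by (intro add_mono mult_left_mono) auto
    finally show ?thesis by (simp add: algebra_simps)
  next
    case 2
    have "t * \<sigma> \<le> 0" "0 \<le> t^2 * \<kappa>" using assms(1) 2 by (auto simp: mult_nonneg_nonpos)
    then show ?thesis by simp
  next
    case 3
    have "t * \<kappa> \<le> \<kappa>" using assms(1,2) 3 by (simp add: mult_left_le_one_le)
    then have "0 \<le> 1 - t" "0 \<le> \<sigma> - \<kappa> - t * \<kappa>" using assms(2) 3 by linarith+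
    then have "0 \<le> (1 - t) * (\<sigma> - \<kappa> - t * \<kappa>)" by (rule mult_nonneg_nonneg)
    then show ?thesis by (simp add: algebra_simps power2_eq_square)
  qed
qed

lemma cramer2:
  fixes g22 g23 g33 t2 t3 a e :: real
  assumes "g22 * g33 - g23^2 \<noteq> 0"
  shows "t2 = 2 * (a * g22 + e * g23) \<and> t3 = 2 * (a * g23 + e * g33) \<longleftrightarrow>
         a = (g33 * t2 - g23 * t3) / (2 * (g22 * g33 - g23^2)) \<and>
         e = (g22 * t3 - g23 * t2) / (2 * (g22 * g33 - g23^2))" (is "?lhs \<longleftrightarrow> ?rhs")
proof
  assume ?lhs
  then show ?rhs using assms by (auto simp: field_simps power2_eq_square)
next
  define D where "D = g22 * g33 - g23^2"
  assume ?rhs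
  then have sol: "2 * D * a = g33 * t2 - g23 * t3" "2 * D * e = g22 * t3 - g23 * t2"
    using assms by (auto simp: D_def)
  have "D * (2 * (a * g22 + e * g23)) = g22 * (2 * D * a) + g23 * (2 * D * e)"
    "D * (2 * (a * g23 + e * g33)) = g23 * (2 * D * a) + g33 * (2 * D * e)"
    by (simp_all add: algebra_simps)
  then have "D * (2 * (a * g22 + e * g23)) = D * t2" "D * (2 * (a * g23 + e * g33)) = D * t3"
    unfolding sol by (simp_all add: D_def algebra_simps power2_eq_square)
  then show ?lhs using assms by (simp add: D_def)
qed

lemma binary_form_nonneg:
  fixes g22 g23 g33 y z :: real
  assumes "0 < g22" "0 \<le> g22 * g33 - g23^2"
  shows "0 \<le> y^2 * g22 + 2 * y * z * g23 + z^2 * g33"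
proof -
  have "g22 * (y^2 * g22 + 2 * y * z * g23 + z^2 * g33)
        = (g22 * y + g23 * z)^2 + (g22 * g33 - g23^2) * z^2"
    by (simp add: algebra_simps power2_eq_square)
  also have "\<dots> \<ge> 0" using assms(2) by simp
  finally show ?thesis using assms(1) by (simp add: zero_le_mult_iff)
qed

lemma binary_form_nonpos_direction:
  fixes g22 g23 g33 :: real
  assumes "\<not> (0 < g22 \<and> 0 < g22 * g33 - g23^2)"
  obtains y z where "(y, z) \<noteq> (0, 0)" "y^2 * g22 + 2 * y * z * g23 + z^2 * g33 \<le> 0"
proof (cases "g22 \<le> 0")
  case True
  then show ?thesis using that[of 1 0] by simp
next
  case False
  have "(- g23)^2 * g22 + 2 * (- g23) * g22 * g23 + g22^2 * g33 = g22 * (g22 * g33 - g23^2)"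
    by (simp add: algebra_simps power2_eq_square)
  also have "\<dots> \<le> 0" using assms False by (simp add: mult_nonneg_nonpos)
  finally show ?thesis using that[of "- g23" g22] False by simp
qed

lemma linear_coeff_zero_at_local_max:
  fixes c0 g h d :: real
  assumes "0 < d" and "\<And>y. \<bar>y\<bar> < d \<Longrightarrow> c0 + y * g - y^2 * h \<le> c0"
  shows "g = 0"
proof -
  have "((\<lambda>y. c0 + y * g - y^2 * h) has_real_derivative g) (at 0)"
    by (auto intro!: derivative_eq_intros)
  then show ?thesis by (rule DERIV_local_max[OF _ assms(1)]) (use assms(2) in auto)
qed

lemma ray_exits_triangle:
  fixes a0 e0 y z :: real
  assumes "0 < a0" "0 < e0" "a0 + e0 < 1" "(y, z) \<noteq> (0, 0)"
  obtains t where "0 \<le> a0 + t * y" "0 \<le> e0 + t * z" "(a0 + t * y) + (e0 + t * z) \<le> 1"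
    "a0 + t * y = 0 \<or> e0 + t * z = 0 \<or> (a0 + t * y) + (e0 + t * z) = 1"
proof -
  define m where "m t = min (a0 + t * y) (min (e0 + t * z) (1 - (a0 + t * y) - (e0 + t * z)))" for t
  \<comment> \<open>the exit time is a zero of m, found by the intermediate value theorem\<close>
  have "\<exists>T\<ge>0. m T \<le> 0"
  proof (cases "y < 0")
    case True
    then show ?thesis using assms(1)
      by (intro exI[of _ "a0 / - y"]) (auto simp: m_def min_le_iff_disj field_simps)
  next
    case y: False
    show ?thesis
    proof (cases "z < 0")
      case True
      then show ?thesis using assms(2)
        by (intro exI[of _ "e0 / - z"]) (auto simp: m_def min_le_iff_disj field_simps)
    next
      case False
      then have "0 < y + z" using y assms(4) by auto
      then show ?thesis using assms(3)
        by (intro exI[of _ "(1 - a0 - e0) / (y + z)"]) (auto simp: m_def min_le_iff_disj field_simps)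
    qed
  qed
  then obtain T where "0 \<le> T" "m T \<le> 0" by blast
  moreover have "0 < m 0" using assms unfolding m_def by simp
  moreover have "continuous_on {0..T} (\<lambda>t. - m t)" unfolding m_def by (intro continuous_intros)
  ultimately obtain t where "m t = 0"
    using IVT'[of "\<lambda>t. - m t" 0 0 T] by auto
  then show ?thesis using that[of t] unfolding m_def by (auto simp: min_def split: if_splits)
qed

lemma nonempty_card_le_3_cases:
  assumes "S \<noteq> {}" "card S \<le> 3" "finite S"
  obtains a b c where "S = {a, b, c}"
proof -
  have "card S \<noteq> 0" using assms by simp
  then consider "card S = 1" | "card S = 2" | "card S = 3" using assms(2) by linarith
  then show ?thesis
  proof cases
    case 1
    then obtain a where "S = {a}" by (rule card_1_singletonE)
    then show ?thesis using that[of a a a] by simp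
  next
    case 2
    then obtain a b where "S = {a, b}" unfolding card_2_iff by blast
    then show ?thesis using that[of a b b] by simp
  next
    case 3
    then show ?thesis using that unfolding card_3_iff by blast
  qed
qed

lemma finite_total_preorder_has_max:
  assumes "finite J" "J \<noteq> {}" and "\<And>i j. i \<in> J \<Longrightarrow> j \<in> J \<Longrightarrow> R i j \<or> R j i"
    and "\<And>i j k. R i j \<Longrightarrow> R j k \<Longrightarrow> R i k" and "\<And>i. R i i"
  shows "\<exists>m\<in>J. \<forall>i\<in>J. R i m"
  using assms(1-3)
proof (induction J rule: finite_ne_induct)
  case (singleton x)
  then show ?case using assms(5) by auto
next
  case (insert x F)
  then obtain m where m: "m \<in> F" "\<forall>i\<in>F. R i m" by blast
  then have "R x m \<or> R m x" using insert.prems by blast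
  then show ?case using m assms(4,5) by blast
qed

section \<open>Affine and conic functions of the dual variable\<close>

definition affine_fun :: "(real^2 \<Rightarrow> real) \<Rightarrow> bool" where
  "affine_fun h \<longleftrightarrow> (\<exists>a \<beta>. \<forall>s. h s = a \<bullet> s + \<beta>)"

lemma affine_fun_const [simp]: "affine_fun (\<lambda>s. k)"
  unfolding affine_fun_def by (rule exI[of _ 0]) auto

lemma affine_fun_inner [simp]: "affine_fun (\<lambda>s. s \<bullet> d)"
  unfolding affine_fun_def by (rule exI[of _ d], rule exI[of _ 0]) (simp add: inner_commute)

lemma affine_fun_add: "affine_fun f \<Longrightarrow> affine_fun g \<Longrightarrow> affine_fun (\<lambda>s. f s + g s)"
proof -
  assume "affine_fun f" "affine_fun g"
  then obtain a1 b1 a2 b2 where "\<forall>s. f s = a1 \<bullet> s + b1" "\<forall>s. g s = a2 \<bullet> s + b2"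
    unfolding affine_fun_def by blast
  then show ?thesis unfolding affine_fun_def
    by (intro exI[of _ "a1 + a2"] exI[of _ "b1 + b2"]) (simp add: inner_add_left)
qed

lemma affine_fun_scale: "affine_fun f \<Longrightarrow> affine_fun (\<lambda>s. k * f s)"
  unfolding affine_fun_def
  by (metis inner_scaleR_left distrib_left)

lemma affine_fun_uminus: "affine_fun f \<Longrightarrow> affine_fun (\<lambda>s. - f s)"
  using affine_fun_scale[of f "-1"] by simp

lemma affine_fun_diff: "affine_fun f \<Longrightarrow> affine_fun g \<Longrightarrow> affine_fun (\<lambda>s. f s - g s)"
  using affine_fun_add[of f "\<lambda>s. - g s"] affine_fun_uminus[of g] by simp

lemma affine_fun_divide: "affine_fun f \<Longrightarrow> affine_fun (\<lambda>s. f s / k)"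
  using affine_fun_scale[of f "1 / k"] by simp

definition conic_fun :: "(real^2 \<Rightarrow> real) \<Rightarrow> bool" where
  "conic_fun h \<longleftrightarrow> (\<exists>k. \<forall>s. h s = conic_poly k s)"

lemma conic_fun_affine: "affine_fun f \<Longrightarrow> conic_fun f"
proof -
  assume "affine_fun f"
  then obtain a \<beta> where "\<forall>s. f s = a \<bullet> s + \<beta>" unfolding affine_fun_def by blast
  then show ?thesis unfolding conic_fun_def
    by (intro exI[of _ "(0, 0, 0, a$1, a$2, \<beta>)"]) (simp add: conic_poly_def inner_real2)
qed

lemma conic_fun_mult_affine: "affine_fun f \<Longrightarrow> affine_fun g \<Longrightarrow> conic_fun (\<lambda>s. f s * g s)"
proof -
  assume "affine_fun f" "affine_fun g"
  then obtain a1 b1 a2 b2 where "\<forall>s. f s = a1 \<bullet> s + b1" "\<forall>s. g s = a2 \<bullet> s + b2"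
    unfolding affine_fun_def by blast
  then show ?thesis unfolding conic_fun_def
    by (intro exI[of _ "(a1$1 * a2$1, a1$1 * a2$2 + a1$2 * a2$1, a1$2 * a2$2,
                         a1$1 * b2 + b1 * a2$1, a1$2 * b2 + b1 * a2$2, b1 * b2)"])
       (simp add: conic_poly_def inner_real2 power2_eq_square algebra_simps)
qed

lemma conic_fun_add: "conic_fun f \<Longrightarrow> conic_fun g \<Longrightarrow> conic_fun (\<lambda>s. f s + g s)"
proof -
  assume "conic_fun f" "conic_fun g"
  then obtain a1 b1 c1 d1 e1 f1 a2 b2 c2 d2 e2 f2
    where "\<forall>s. f s = conic_poly (a1, b1, c1, d1, e1, f1) s"
      and "\<forall>s. g s = conic_poly (a2, b2, c2, d2, e2, f2) s"
    unfolding conic_fun_def by (metis prod_cases6)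
  then show ?thesis unfolding conic_fun_def
    by (intro exI[of _ "(a1 + a2, b1 + b2, c1 + c2, d1 + d2, e1 + e2, f1 + f2)"])
       (simp add: conic_poly_def algebra_simps)
qed

lemma conic_fun_scale: "conic_fun f \<Longrightarrow> conic_fun (\<lambda>s. k * f s)"
proof -
  assume "conic_fun f"
  then obtain a1 b1 c1 d1 e1 f1 where "\<forall>s. f s = conic_poly (a1, b1, c1, d1, e1, f1) s"
    unfolding conic_fun_def by (metis prod_cases6)
  then show ?thesis unfolding conic_fun_def
    by (intro exI[of _ "(k * a1, k * b1, k * c1, k * d1, k * e1, k * f1)"])
       (simp add: conic_poly_def algebra_simps)
qed

lemma conic_fun_diff: "conic_fun f \<Longrightarrow> conic_fun g \<Longrightarrow> conic_fun (\<lambda>s. f s - g s)"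
  using conic_fun_add[of f "\<lambda>s. -1 * g s"] conic_fun_scale[of g "-1"] by simp

lemma conic_fun_imp_quad_fun:
  assumes "conic_fun f"
  shows "\<exists>M w k. \<forall>s. f s = quad_fun M w k s"
proof -
  obtain a1 b1 c1 d1 e1 f1 where f: "\<forall>s. f s = conic_poly (a1, b1, c1, d1, e1, f1) s"
    using assms unfolding conic_fun_def by (metis prod_cases6)
  define M :: "real^2^2" where "M = (\<chi> i j. if i = 1 \<and> j = 1 then a1 else if i = 1 \<and> j = 2 then b1
                                          else if i = 2 \<and> j = 2 then c1 else 0)"
  have "M$1$1 = a1" "M$1$2 = b1" "M$2$1 = 0" "M$2$2 = c1" unfolding M_def by auto
  then show ?thesis using f
    by (intro exI[of _ M] exI[of _ "vector [d1, e1] :: real^2"] exI[of _ f1])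
       (simp add: conic_poly_def quad_fun_def inner_real2 matrix_vector_mult_real2
         power2_eq_square algebra_simps)
qed

section \<open>Sign patterns of parabolas\<close>

definition same_side :: "coeffs set \<Rightarrow> real^2 \<Rightarrow> real^2 \<Rightarrow> bool" where
  "same_side K s1 s2 \<longleftrightarrow>
     (\<forall>k\<in>K. (conic_poly k s1 \<le> 0 \<and> conic_poly k s2 \<le> 0) \<or> (0 \<le> conic_poly k s1 \<and> 0 \<le> conic_poly k s2))"

definition sign_split_by :: "coeffs set \<Rightarrow> (real^2 \<Rightarrow> real) \<Rightarrow> bool" where
  "sign_split_by K h \<longleftrightarrow> (\<forall>s1 s2. same_side K s1 s2 \<longrightarrow> \<not> (h s1 < 0 \<and> 0 < h s2))"

definition sign_split :: "(real^2 \<Rightarrow> real) \<Rightarrow> bool" where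
  "sign_split h \<longleftrightarrow> (\<exists>K. finite K \<and> (\<forall>k\<in>K. parabolic_coeffs k) \<and> sign_split_by K h)"

lemma same_side_sym: "same_side K s1 s2 \<Longrightarrow> same_side K s2 s1"
  unfolding same_side_def by blast

lemma sign_split_by_mono: "sign_split_by K h \<Longrightarrow> K \<subseteq> L \<Longrightarrow> sign_split_by L h"
  unfolding sign_split_by_def same_side_def by blast

lemma sign_split_family:
  assumes "finite H" and "\<forall>h\<in>H. sign_split h"
  shows "\<exists>K. finite K \<and> (\<forall>k\<in>K. parabolic_coeffs k) \<and> (\<forall>h\<in>H. sign_split_by K h)"
  using assms
proof (induction H rule: finite_induct)
  case empty
  show ?case by (intro exI[of _ "{}"]) simp
next
  case (insert h H)
  then obtain K L where "finite K" "\<forall>k\<in>K. parabolic_coeffs k" "\<forall>h\<in>H. sign_split_by K h"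
    and "finite L" "\<forall>k\<in>L. parabolic_coeffs k" "sign_split_by L h"
    unfolding sign_split_def by auto
  then show ?case by (intro exI[of _ "K \<union> L"]) (auto intro: sign_split_by_mono)
qed

lemma sign_split_cong: "sign_split h \<Longrightarrow> (\<And>s. g s = h s) \<Longrightarrow> sign_split g"
  by (metis ext)

lemma sign_split_nonneg: "(\<And>s. 0 \<le> h s) \<Longrightarrow> sign_split h"
  unfolding sign_split_def sign_split_by_def by (intro exI[of _ "{}"]) (auto simp: not_less)

lemma sign_split_nonpos: "(\<And>s. h s \<le> 0) \<Longrightarrow> sign_split h"
  unfolding sign_split_def sign_split_by_def by (intro exI[of _ "{}"]) (auto simp: not_less)

lemma sign_split_uminus: "sign_split h \<Longrightarrow> sign_split (\<lambda>s. - h s)"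
  unfolding sign_split_def sign_split_by_def
  by (metis neg_less_0_iff_less neg_0_less_iff_less same_side_sym)

lemma sign_split_parabola:
  assumes "b1^2 - 4 * a1 * c1 = 0"
  shows "sign_split (conic_poly (a1, b1, c1, d1, e1, f1))"
proof (cases "(a1, b1, c1, d1, e1, f1) = (0, 0, 0, 0, 0, 0)")
  case True
  then show ?thesis by (intro sign_split_nonneg) (simp add: conic_poly_def)
next
  case False
  then show ?thesis unfolding sign_split_def sign_split_by_def
    using assms by (intro exI[of _ "{(a1, b1, c1, d1, e1, f1)}"])
                   (auto simp: parabolic_coeffs_def same_side_def)
qed

lemma sign_split_affine_plus_square:
  assumes "affine_fun l0" "affine_fun l"
  shows "sign_split (\<lambda>s. l0 s + \<gamma> * (l s)^2)"
proof -
  obtain a0 b0 a \<beta> where h: "\<forall>s. l0 s = a0 \<bullet> s + b0" "\<forall>s. l s = a \<bullet> s + \<beta>"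
    using assms unfolding affine_fun_def by blast
  have "sign_split (conic_poly (\<gamma> * (a$1)^2, 2 * \<gamma> * a$1 * a$2, \<gamma> * (a$2)^2,
                                a0$1 + 2 * \<gamma> * \<beta> * a$1, a0$2 + 2 * \<gamma> * \<beta> * a$2, b0 + \<gamma> * \<beta>^2))"
    by (rule sign_split_parabola) (simp add: power2_eq_square algebra_simps)
  then show ?thesis
    by (rule sign_split_cong) (simp add: h conic_poly_def inner_real2 power2_eq_square algebra_simps)
qed

lemma sign_split_affine: "affine_fun l \<Longrightarrow> sign_split l"
  using sign_split_affine_plus_square[of l "\<lambda>s. 0" 0] by simp

(* Lines are degenerate parabolas: parabolic_coeffs only asks for b^2 = 4ac. *)
definition affine_coeffs :: "(real^2 \<Rightarrow> real) \<Rightarrow> coeffs" where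
  "affine_coeffs h = (0, 0, 0, h (vector [1, 0]) - h 0, h (vector [0, 1]) - h 0, h 0)"

lemma conic_poly_affine_coeffs: "affine_fun h \<Longrightarrow> conic_poly (affine_coeffs h) s = h s"
  unfolding affine_fun_def affine_coeffs_def conic_poly_def by (auto simp: inner_real2)

lemma parabolic_affine_coeffs:
  assumes "affine_fun h" and "h s \<noteq> 0"
  shows "parabolic_coeffs (affine_coeffs h)"
proof -
  have "affine_coeffs h \<noteq> (0, 0, 0, 0, 0, 0)"
    using conic_poly_affine_coeffs[OF assms(1), of s] assms(2) by (auto simp: conic_poly_def)
  then show ?thesis unfolding affine_coeffs_def parabolic_coeffs_def by simp
qed

lemma same_side_affine_coeffs:
  assumes "same_side K s1 s2" "affine_coeffs h \<in> K" "affine_fun h"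
  shows "0 \<le> h s1 * h s2"
  using assms unfolding same_side_def
  by (force simp: conic_poly_affine_coeffs zero_le_mult_iff)

lemma sign_split_affine_mult:
  assumes l1: "affine_fun l1" and l2: "affine_fun l2"
  shows "sign_split (\<lambda>s. l1 s * l2 s)"
proof -
  define K where "K = {k \<in> {affine_coeffs l1, affine_coeffs l2}. parabolic_coeffs k}"
  have "\<not> (l1 s1 * l2 s1 < 0 \<and> 0 < l1 s2 * l2 s2)" if "same_side K s1 s2" for s1 s2
  proof
    assume neg_pos: "l1 s1 * l2 s1 < 0 \<and> 0 < l1 s2 * l2 s2"
    then have "l1 s1 \<noteq> 0" "l2 s1 \<noteq> 0" by auto
    then have "affine_coeffs l1 \<in> K" "affine_coeffs l2 \<in> K"
      unfolding K_def using parabolic_affine_coeffs l1 l2 by auto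
    then have "0 \<le> (l1 s1 * l1 s2) * (l2 s1 * l2 s2)"
      using same_side_affine_coeffs[OF that] l1 l2 by simp
    moreover have "(l1 s1 * l2 s1) * (l1 s2 * l2 s2) < 0"
      using neg_pos by (simp add: mult_neg_pos)
    ultimately show False by (simp add: algebra_simps)
  qed
  then show ?thesis unfolding sign_split_def sign_split_by_def K_def
    by (intro exI[of _ K]) (auto simp: K_def)
qed

definition neg_coeffs :: "coeffs \<Rightarrow> coeffs" where
  "neg_coeffs k = (case k of (a, b, c, d, e, f) \<Rightarrow> (-a, -b, -c, -d, -e, -f))"

lemma conic_poly_neg_coeffs [simp]: "conic_poly (neg_coeffs k) s = - conic_poly k s"
  by (cases k) (simp add: neg_coeffs_def conic_poly_def)

lemma parabolic_neg_coeffs: "parabolic_coeffs k \<Longrightarrow> parabolic_coeffs (neg_coeffs k)"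
  by (cases k) (auto simp: neg_coeffs_def parabolic_coeffs_def power2_eq_square)

definition sign_cell :: "coeffs set \<Rightarrow> coeffs set \<Rightarrow> (real^2) set" where
  "sign_cell K S = {s. \<forall>k\<in>K. if k \<in> S then conic_poly k s \<le> 0 else 0 \<le> conic_poly k s}"

lemma same_side_sign_cell: "s1 \<in> sign_cell K S \<Longrightarrow> s2 \<in> sign_cell K S \<Longrightarrow> same_side K s1 s2"
  unfolding sign_cell_def same_side_def by (auto split: if_splits)

lemma parabolic_region_sign_cell:
  assumes "finite K" "\<forall>k\<in>K. parabolic_coeffs k" "S \<subseteq> K"
  shows "parabolic_region (sign_cell K S)"
  unfolding parabolic_region_def
proof (intro exI[of _ "S \<union> neg_coeffs ` (K - S)"] conjI ballI)
  show "finite (S \<union> neg_coeffs ` (K - S))" using assms finite_subset by auto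
  show "parabolic_coeffs k" if "k \<in> S \<union> neg_coeffs ` (K - S)" for k
    using that assms parabolic_neg_coeffs by auto
  have "(\<forall>k\<in>S \<union> neg_coeffs ` (K - S). conic_poly k s \<le> 0) \<longleftrightarrow>
        (\<forall>k\<in>S. conic_poly k s \<le> 0) \<and> (\<forall>k\<in>K - S. 0 \<le> conic_poly k s)" for s
    by (simp add: ball_Un)
  then show "sign_cell K S = {s. \<forall>k\<in>S \<union> neg_coeffs ` (K - S). conic_poly k s \<le> 0}"
    using assms(3) unfolding sign_cell_def by (auto split: if_splits)
qed

lemma sign_cells_cover: "\<exists>S\<in>Pow K. s \<in> sign_cell K S"
  by (rule bexI[of _ "{k \<in> K. conic_poly k s \<le> 0}"]) (auto simp: sign_cell_def)

lemma sign_cells_inter_parabola: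
  assumes "\<forall>k\<in>K. parabolic_coeffs k" "S1 \<subseteq> K" "S2 \<subseteq> K" "S1 \<noteq> S2"
  shows "\<exists>P. parabola P \<and> sign_cell K S1 \<inter> sign_cell K S2 \<subseteq> P"
proof -
  obtain k where k: "k \<in> K" "k \<in> S1 \<longleftrightarrow> k \<notin> S2" using assms(2-4) by blast
  then have "sign_cell K S1 \<inter> sign_cell K S2 \<subseteq> {s. conic_poly k s = 0}"
    unfolding sign_cell_def by (force split: if_splits)
  moreover have "parabola {s. conic_poly k s = 0}" unfolding parabola_def using assms(1) k(1) by blast
  ultimately show ?thesis by blast
qed

lemma admits_parabolic_subdivision_sign_cells:
  assumes "finite K" "\<forall>k\<in>K. parabolic_coeffs k"
    and "\<And>S. S \<subseteq> K \<Longrightarrow> \<exists>M w k. \<forall>s\<in>sign_cell K S. F s = ereal (quad_fun M w k s)"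
  shows "admits_parabolic_subdivision F"
  unfolding admits_parabolic_subdivision_def
proof (intro exI[of _ "sign_cell K ` Pow K"] conjI ballI impI)
  show "finite (sign_cell K ` Pow K)" using assms(1) by simp
  show "\<Union> (sign_cell K ` Pow K) = UNIV" using sign_cells_cover by blast
  fix R1 assume "R1 \<in> sign_cell K ` Pow K"
  then obtain S1 where S1: "S1 \<subseteq> K" "R1 = sign_cell K S1" by blast
  then show "parabolic_region R1" using parabolic_region_sign_cell assms(1,2) by blast
  show "\<exists>M w k. \<forall>s\<in>R1. F s = ereal (quad_fun M w k s)" using S1 assms(3) by blast
  fix R2 assume "R2 \<in> sign_cell K ` Pow K" "R1 \<noteq> R2"
  then obtain S2 where "S2 \<subseteq> K" "R2 = sign_cell K S2" "S1 \<noteq> S2" using S1 by blast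
  then show "R1 \<inter> R2 = {} \<or> (\<exists>P. parabola P \<and> R1 \<inter> R2 \<subseteq> P)"
    using sign_cells_inter_parabola[OF assms(2) S1(1)] S1(2) by blast
qed

section \<open>Conjugates and convex envelopes\<close>

lemma conjugate_INF: "conjugate (\<lambda>x. INF j\<in>J. f j x) = (\<lambda>s. SUP j\<in>J. conjugate (f j) s)"
proof (rule ext, cases "J = {}")
  case True
  then show "conjugate (\<lambda>x. INF j\<in>J. f j x) s = (SUP j\<in>J. conjugate (f j) s)" for s
    by (simp add: conjugate_def top_ereal_def bot_ereal_def)
next
  case False
  then have "ereal (s \<bullet> x) - (INF j\<in>J. f j x) = (SUP j\<in>J. ereal (s \<bullet> x) - f j x)" for s x
    by (simp add: SUP_ereal_minus_right)
  then show "conjugate (\<lambda>x. INF j\<in>J. f j x) s = (SUP j\<in>J. conjugate (f j) s)" for s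
    unfolding conjugate_def by (simp add: SUP_commute[of _ UNIV J])
qed

lemma convex_envelope_le: "convex_envelope g x \<le> g x"
  unfolding convex_envelope_def by (rule SUP_least) auto

lemma conjugate_convex_envelope: "conjugate (convex_envelope g) = conjugate g"
proof (intro ext antisym)
  fix s
  show "conjugate g s \<le> conjugate (convex_envelope g) s"
    unfolding conjugate_def
    by (intro SUP_mono) (meson UNIV_I convex_envelope_le ereal_minus_mono order_refl)
  show "conjugate (convex_envelope g) s \<le> conjugate g s"
  proof (rule ereal_le_real)
    fix M assume M: "conjugate g s \<le> ereal M"
    define h where "h z = ereal (s \<bullet> z - M)" for z
    have epi: "epigraph h = {z. (s, -1) \<bullet> z \<le> M}"
      unfolding epigraph_def h_def by (auto simp: inner_Pair inner_commute)
    have "h z \<le> g z" for z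
    proof -
      have "ereal (s \<bullet> z) - g z \<le> ereal M"
        using M unfolding conjugate_def by (meson SUP_upper UNIV_I order_trans)
      then show ?thesis unfolding h_def by (cases "g z") (auto simp: ereal_minus_le_iff)
    qed
    moreover have "ereal_convex_fun h" "ereal_lsc_fun h"
      unfolding ereal_convex_fun_def ereal_lsc_fun_def epi
      by (simp_all add: convex_halfspace_le closed_halfspace_le)
    ultimately have "h x \<le> convex_envelope g x" for x
      unfolding convex_envelope_def by (intro SUP_upper2[of h]) auto
    then have "ereal (s \<bullet> x) - convex_envelope g x \<le> ereal M" for x
      using ereal_minus_mono[OF order_refl, of "h x" "convex_envelope g x" "ereal (s \<bullet> x)"]
      by (simp add: h_def)
    then show "conjugate (convex_envelope g) s \<le> ereal M"
      unfolding conjugate_def by (rule SUP_least)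
  qed
qed

section \<open>The conjugate of a quadratic function on a polytope\<close>

locale quadratic_on_polytope =
  fixes A :: "real^2^2" and b :: "real^2" and c :: real and V :: "(real^2) set"
  assumes symmetric: "transpose A = A" and finite_V: "finite V" and V_nonempty: "V \<noteq> {}"
begin

definition bform :: "real^2 \<Rightarrow> real^2 \<Rightarrow> real" where
  "bform x y = x \<bullet> (A *v y)"

definition qform :: "real^2 \<Rightarrow> real" where
  "qform x = bform x x"

definition phi :: "real^2 \<Rightarrow> real^2 \<Rightarrow> real" where
  "phi s x = s \<bullet> x - quad_fun A b c x"

definition slope :: "real^2 \<Rightarrow> real^2 \<Rightarrow> real^2 \<Rightarrow> real" where
  "slope s v d = (s - b) \<bullet> d - 2 * bform v d"

lemma bform_real2:
  "bform x y = x$1 * (A$1$1 * y$1 + A$2$1 * y$2) + x$2 * (A$2$1 * y$1 + A$2$2 * y$2)"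
proof -
  have "A$1$2 = (transpose A)$2$1" by (simp add: transpose_def)
  then show ?thesis unfolding bform_def by (simp add: inner_real2 matrix_vector_mult_real2 symmetric)
qed

lemma bform_commute: "bform x y = bform y x"
  unfolding bform_real2 by (simp add: algebra_simps)

lemma qform_scale: "qform (l *\<^sub>R d) = l^2 * qform d"
  unfolding qform_def bform_real2 by (simp add: algebra_simps power2_eq_square)

lemma qform_zero [simp]: "qform 0 = 0"
  unfolding qform_def bform_real2 by simp

lemma phi_line: "phi s (v + t *\<^sub>R d) = phi s v + t * slope s v d - t^2 * qform d"
  unfolding phi_def slope_def qform_def quad_fun_def bform_def[symmetric] bform_real2
  by (simp add: inner_real2 algebra_simps power2_eq_square)

lemma phi_plane: "phi s (v + a *\<^sub>R d2 + e *\<^sub>R d3) =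
     phi s v + a * slope s v d2 + e * slope s v d3
     - (a^2 * qform d2 + 2 * a * e * bform d2 d3 + e^2 * qform d3)"
  unfolding phi_def slope_def qform_def quad_fun_def bform_def[symmetric] bform_real2
  by (simp add: inner_real2 algebra_simps power2_eq_square)

lemma slope_plane:
  "slope s (v + a *\<^sub>R d2 + e *\<^sub>R d3) d = slope s v d - 2 * (a * bform d2 d + e * bform d3 d)"
  unfolding slope_def bform_real2 by (simp add: algebra_simps)

lemma slope_scale: "slope s v (l *\<^sub>R d) = l * slope s v d"
  unfolding slope_def bform_real2 by (simp add: inner_real2 algebra_simps)

lemma slope_base_change: "slope s w d = slope s v d - 2 * bform (w - v) d"
  unfolding slope_def bform_real2 by (simp add: algebra_simps)

lemma affine_fun_phi: "affine_fun (\<lambda>s. phi s v)"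
  unfolding phi_def by (intro affine_fun_diff) (auto simp: inner_commute)

lemma affine_fun_slope: "affine_fun (\<lambda>s. slope s v d)"
proof -
  have "slope s v d = s \<bullet> d + (- (b \<bullet> d) - 2 * bform v d)" for s
    unfolding slope_def by (simp add: inner_diff_left)
  then show ?thesis using affine_fun_add[OF affine_fun_inner[of d] affine_fun_const] by simp
qed

lemma continuous_on_phi: "continuous_on S (phi s)"
  unfolding phi_def quad_fun_def by (intro continuous_intros)

end

(* A candidate is a vertex, a segment or a triangle spanned by points of V. Its point maximises
   phi s on the affine hull of the candidate (where q is strictly convex for admissible ones),
   and it is valid at s when that point lies in the candidate itself. *)
datatype candidate =
  Vertex "real^2" | Edge "real^2" "real^2" | is_Triangle: Triangle "real^2" "real^2" "real^2"

context quadratic_on_polytope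
begin

definition edge_time :: "real^2 \<Rightarrow> real^2 \<Rightarrow> real^2 \<Rightarrow> real" where
  "edge_time v w s = slope s v (w - v) / (2 * qform (w - v))"

definition gram_det :: "real^2 \<Rightarrow> real^2 \<Rightarrow> real^2 \<Rightarrow> real" where
  "gram_det v1 v2 v3 = qform (v2 - v1) * qform (v3 - v1) - (bform (v2 - v1) (v3 - v1))^2"

definition crit2 :: "real^2 \<Rightarrow> real^2 \<Rightarrow> real^2 \<Rightarrow> real^2 \<Rightarrow> real" where
  "crit2 v1 v2 v3 s = (qform (v3 - v1) * slope s v1 (v2 - v1)
                       - bform (v2 - v1) (v3 - v1) * slope s v1 (v3 - v1)) / (2 * gram_det v1 v2 v3)"

definition crit3 :: "real^2 \<Rightarrow> real^2 \<Rightarrow> real^2 \<Rightarrow> real^2 \<Rightarrow> real" where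
  "crit3 v1 v2 v3 s = (qform (v2 - v1) * slope s v1 (v3 - v1)
                       - bform (v2 - v1) (v3 - v1) * slope s v1 (v2 - v1)) / (2 * gram_det v1 v2 v3)"

fun point :: "candidate \<Rightarrow> real^2 \<Rightarrow> real^2" where
  "point (Vertex v) s = v"
| "point (Edge v w) s = v + edge_time v w s *\<^sub>R (w - v)"
| "point (Triangle v1 v2 v3) s =
     v1 + crit2 v1 v2 v3 s *\<^sub>R (v2 - v1) + crit3 v1 v2 v3 s *\<^sub>R (v3 - v1)"

fun valid :: "candidate \<Rightarrow> real^2 \<Rightarrow> bool" where
  "valid (Vertex v) s = True"
| "valid (Edge v w) s = (0 \<le> edge_time v w s \<and> edge_time v w s \<le> 1)"
| "valid (Triangle v1 v2 v3) s =
     (0 \<le> crit2 v1 v2 v3 s \<and> 0 \<le> crit3 v1 v2 v3 s \<and> crit2 v1 v2 v3 s + crit3 v1 v2 v3 s \<le> 1)"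

fun admissible :: "candidate \<Rightarrow> bool" where
  "admissible (Vertex v) = (v \<in> V)"
| "admissible (Edge v w) = (v \<in> V \<and> w \<in> V \<and> 0 < qform (w - v))"
| "admissible (Triangle v1 v2 v3) =
     (v1 \<in> V \<and> v2 \<in> V \<and> v3 \<in> V \<and> 0 < qform (v2 - v1) \<and> 0 < gram_det v1 v2 v3)"

fun constraints :: "candidate \<Rightarrow> (real^2 \<Rightarrow> real) set" where
  "constraints (Vertex v) = {}"
| "constraints (Edge v w) = {\<lambda>s. - edge_time v w s, \<lambda>s. edge_time v w s - 1}"
| "constraints (Triangle v1 v2 v3) =
     {\<lambda>s. - crit2 v1 v2 v3 s, \<lambda>s. - crit3 v1 v2 v3 s, \<lambda>s. crit2 v1 v2 v3 s + crit3 v1 v2 v3 s - 1}"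

definition cand_value :: "candidate \<Rightarrow> real^2 \<Rightarrow> real" where
  "cand_value k s = phi s (point k s)"

lemma valid_iff_constraints: "valid k s \<longleftrightarrow> (\<forall>h\<in>constraints k. h s \<le> 0)"
  by (cases k) auto

lemma finite_constraints: "finite (constraints k)"
  by (cases k) auto

lemma affine_fun_edge_time: "affine_fun (edge_time v w)"
  unfolding edge_time_def using affine_fun_divide[OF affine_fun_slope] by simp

lemma affine_fun_crit2: "affine_fun (crit2 v1 v2 v3)"
  unfolding crit2_def by (intro affine_fun_divide affine_fun_diff affine_fun_scale affine_fun_slope)

lemma affine_fun_crit3: "affine_fun (crit3 v1 v2 v3)"
  unfolding crit3_def by (intro affine_fun_divide affine_fun_diff affine_fun_scale affine_fun_slope)

lemma affine_fun_constraint: "h \<in> constraints k \<Longrightarrow> affine_fun h"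
  by (cases k) (auto intro!: affine_fun_uminus affine_fun_diff affine_fun_add
                     affine_fun_edge_time affine_fun_crit2 affine_fun_crit3)

lemma cand_value_Edge:
  "0 < qform (w - v) \<Longrightarrow>
     cand_value (Edge v w) s = phi s v + (slope s v (w - v))^2 / (4 * qform (w - v))"
  unfolding cand_value_def point.simps phi_line edge_time_def by (simp add: field_simps power2_eq_square)

lemma phi_Edge_line:
  "0 < qform (w - v) \<Longrightarrow>
     phi s (v + t *\<^sub>R (w - v)) = cand_value (Edge v w) s - qform (w - v) * (t - edge_time v w s)^2"
  unfolding cand_value_Edge phi_line edge_time_def by (simp add: field_simps power2_eq_square)

lemma conic_fun_cand_value:
  assumes "admissible k"
  shows "conic_fun (cand_value k)"
proof (cases k)
  case (Vertex v)
  then show ?thesis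
    using conic_fun_affine[OF affine_fun_phi[of v]] by (simp add: cand_value_def[abs_def])
next
  case (Edge v w)
  then have "cand_value k =
      (\<lambda>s. phi s v + (1 / (4 * qform (w - v))) * (slope s v (w - v) * slope s v (w - v)))"
    using cand_value_Edge assms by (auto simp: power2_eq_square)
  then show ?thesis
    by (simp only:) (intro conic_fun_add conic_fun_scale conic_fun_mult_affine conic_fun_affine
                      affine_fun_phi affine_fun_slope)
next
  case (Triangle v1 v2 v3)
  let ?a = "crit2 v1 v2 v3" and ?e = "crit3 v1 v2 v3"
  have "cand_value k = (\<lambda>s. phi s v1 + ?a s * slope s v1 (v2 - v1) + ?e s * slope s v1 (v3 - v1)
     - (qform (v2 - v1) * (?a s * ?a s) + (2 * bform (v2 - v1) (v3 - v1)) * (?a s * ?e s)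
        + qform (v3 - v1) * (?e s * ?e s)))"
    using Triangle
    by (intro ext) (simp only: cand_value_def point.simps phi_plane, simp add: power2_eq_square algebra_simps)
  then show ?thesis
    by (simp only:) (intro conic_fun_add conic_fun_diff conic_fun_scale conic_fun_mult_affine
                      conic_fun_affine affine_fun_phi affine_fun_slope affine_fun_crit2 affine_fun_crit3)
qed

lemma point_in_hull:
  assumes "admissible k" "valid k s"
  shows "point k s \<in> convex hull V"
proof (cases k)
  case (Vertex v)
  then show ?thesis using assms by (simp add: hull_inc)
next
  case (Edge v w)
  let ?t = "edge_time v w s"
  have "point k s = (1 - ?t) *\<^sub>R v + ?t *\<^sub>R w" using Edge by (simp add: algebra_simps)
  moreover have "v \<in> convex hull V" "w \<in> convex hull V" using assms Edge by (auto simp: hull_inc)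
  ultimately show ?thesis using assms Edge convexD_alt[OF convex_convex_hull] by auto
next
  case (Triangle v1 v2 v3)
  then have "point k s \<in> convex hull {v1, v2, v3}"
    using assms unfolding convex_hull_3_alt by auto
  moreover have "convex hull {v1, v2, v3} \<subseteq> convex hull V" using assms Triangle by (intro hull_mono) auto
  ultimately show ?thesis by blast
qed

lemma gram_det_cross2:
  "gram_det v1 v2 v3 = (A$1$1 * A$2$2 - (A$2$1)^2) * (cross2 (v2 - v1) (v3 - v1))^2"
  unfolding gram_det_def qform_def bform_real2 cross2_def by (simp add: algebra_simps power2_eq_square)

lemma crit_coords_iff_slopes_zero:
  assumes "gram_det v1 v2 v3 \<noteq> 0"
  shows "a = crit2 v1 v2 v3 s \<and> e = crit3 v1 v2 v3 s \<longleftrightarrow>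
         slope s (v1 + a *\<^sub>R (v2 - v1) + e *\<^sub>R (v3 - v1)) (v2 - v1) = 0 \<and>
         slope s (v1 + a *\<^sub>R (v2 - v1) + e *\<^sub>R (v3 - v1)) (v3 - v1) = 0"
proof -
  let ?d2 = "v2 - v1" and ?d3 = "v3 - v1" and ?x = "v1 + a *\<^sub>R (v2 - v1) + e *\<^sub>R (v3 - v1)"
  have "slope s ?x ?d2 = 0 \<longleftrightarrow> slope s v1 ?d2 = 2 * (a * qform ?d2 + e * bform ?d2 ?d3)"
    "slope s ?x ?d3 = 0 \<longleftrightarrow> slope s v1 ?d3 = 2 * (a * bform ?d2 ?d3 + e * qform ?d3)"
    unfolding slope_plane qform_def bform_commute[of ?d3 ?d2] by linarith+
  moreover have "crit2 v1 v2 v3 s = (qform ?d3 * slope s v1 ?d2 - bform ?d2 ?d3 * slope s v1 ?d3)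
                                    / (2 * (qform ?d2 * qform ?d3 - (bform ?d2 ?d3)^2))"
    "crit3 v1 v2 v3 s = (qform ?d2 * slope s v1 ?d3 - bform ?d2 ?d3 * slope s v1 ?d2)
                                    / (2 * (qform ?d2 * qform ?d3 - (bform ?d2 ?d3)^2))"
    unfolding crit2_def crit3_def gram_det_def by simp_all
  ultimately show ?thesis
    using cramer2[OF assms[unfolded gram_det_def], of "slope s v1 ?d2" a e "slope s v1 ?d3"] by metis
qed

lemma phi_le_cand_value_Triangle:
  assumes "admissible (Triangle v1 v2 v3)"
  shows "phi s x \<le> cand_value (Triangle v1 v2 v3) s"
proof -
  let ?d2 = "v2 - v1" and ?d3 = "v3 - v1" and ?p = "point (Triangle v1 v2 v3) s"
  have pos: "0 < qform ?d2" "0 < gram_det v1 v2 v3" using assms by auto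
  then have "cross2 ?d2 ?d3 \<noteq> 0" unfolding gram_det_cross2 by auto
  then obtain y z where "x - ?p = y *\<^sub>R ?d2 + z *\<^sub>R ?d3"
    using decompose_cross2 by blast
  then have x: "x = ?p + y *\<^sub>R ?d2 + z *\<^sub>R ?d3"
    by (simp add: algebra_simps)
  have "slope s ?p ?d2 = 0" "slope s ?p ?d3 = 0"
    using crit_coords_iff_slopes_zero[of v1 v2 v3 "crit2 v1 v2 v3 s" s "crit3 v1 v2 v3 s"] pos by simp_all
  then have "phi s x = phi s ?p - (y^2 * qform ?d2 + 2 * y * z * bform ?d2 ?d3 + z^2 * qform ?d3)"
    unfolding x phi_plane by simp
  moreover have "0 \<le> y^2 * qform ?d2 + 2 * y * z * bform ?d2 ?d3 + z^2 * qform ?d3"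
    using pos unfolding gram_det_def qform_def by (intro binary_form_nonneg) auto
  ultimately show ?thesis unfolding cand_value_def by simp
qed

lemma segment_dominated:
  assumes "v \<in> V" "w \<in> V" "0 \<le> t" "t \<le> 1"
  shows "\<exists>k. \<not> is_Triangle k \<and> admissible k \<and> valid k s \<and> phi s (v + t *\<^sub>R (w - v)) \<le> cand_value k s"
proof (cases "0 < qform (w - v) \<and> 0 \<le> slope s v (w - v) \<and> slope s v (w - v) \<le> 2 * qform (w - v)")
  case True
  then have "admissible (Edge v w)" "valid (Edge v w) s"
    using assms by (auto simp: edge_time_def field_simps)
  moreover have "phi s (v + t *\<^sub>R (w - v)) \<le> cand_value (Edge v w) s"
    using phi_Edge_line True by simp
  ultimately show ?thesis by (intro exI[of _ "Edge v w"]) simp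
next
  case False
  have "cand_value (Vertex w) s = phi s v + slope s v (w - v) - qform (w - v)"
    using phi_line[of s v 1 "w - v"] by (simp add: cand_value_def)
  then have le_max: "phi s (v + t *\<^sub>R (w - v)) \<le> max (cand_value (Vertex v) s) (cand_value (Vertex w) s)"
    using quadratic_le_max_endpoints[OF assms(3,4) False] by (simp add: phi_line cand_value_def)
  show ?thesis
  proof (cases "cand_value (Vertex v) s \<le> cand_value (Vertex w) s")
    case True
    then show ?thesis using le_max assms(2) by (intro exI[of _ "Vertex w"]) simp
  next
    case False
    then show ?thesis using le_max assms(1) by (intro exI[of _ "Vertex v"]) simp
  qed
qed

lemma triangle_boundary_dominated:
  assumes "v1 \<in> V" "v2 \<in> V" "v3 \<in> V" and "0 \<le> a" "0 \<le> e" "a + e \<le> 1"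
    and "a = 0 \<or> e = 0 \<or> a + e = 1"
  shows "\<exists>k. \<not> is_Triangle k \<and> admissible k \<and> valid k s \<and>
               phi s (v1 + a *\<^sub>R (v2 - v1) + e *\<^sub>R (v3 - v1)) \<le> cand_value k s"
proof -
  consider "a = 0" | "e = 0" | "e = 1 - a" using assms(7) by linarith
  then show ?thesis
  proof cases
    case 1
    then show ?thesis using segment_dominated[of v1 v3 e s] assms by simp
  next
    case 2
    then show ?thesis using segment_dominated[of v1 v2 a s] assms by simp
  next
    case 3
    have "v1 + a *\<^sub>R (v2 - v1) + e *\<^sub>R (v3 - v1) = v3 + a *\<^sub>R (v2 - v3)"
      unfolding 3 by (simp add: vec_eq_iff algebra_simps)
    then show ?thesis using segment_dominated[of v3 v2 a s] assms by simp
  qed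
qed

lemma slope_zero_at_local_max:
  assumes "0 < \<delta>" and "\<And>y. \<bar>y\<bar> < \<delta> \<Longrightarrow> phi s (x + y *\<^sub>R d) \<le> phi s x"
  shows "slope s x d = 0"
  using assms
  by (intro linear_coeff_zero_at_local_max[of \<delta> "phi s x" _ "qform d"]) (simp_all add: phi_line)

lemma interior_triangle_max_dominated:
  assumes V: "v1 \<in> V" "v2 \<in> V" "v3 \<in> V" and int: "0 < a0" "0 < e0" "a0 + e0 < 1"
    and max: "\<And>a e. 0 \<le> a \<Longrightarrow> 0 \<le> e \<Longrightarrow> a + e \<le> 1 \<Longrightarrow>
      phi s (v1 + a *\<^sub>R (v2 - v1) + e *\<^sub>R (v3 - v1)) \<le> phi s (v1 + a0 *\<^sub>R (v2 - v1) + e0 *\<^sub>R (v3 - v1))"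
  shows "\<exists>k. admissible k \<and> valid k s \<and> phi s (v1 + a0 *\<^sub>R (v2 - v1) + e0 *\<^sub>R (v3 - v1)) \<le> cand_value k s"
proof -
  let ?d2 = "v2 - v1" and ?d3 = "v3 - v1"
  define x0 where "x0 = v1 + a0 *\<^sub>R ?d2 + e0 *\<^sub>R ?d3"
  let ?form = "\<lambda>y z. y^2 * qform ?d2 + 2 * y * z * bform ?d2 ?d3 + z^2 * qform ?d3"
  have shift: "v1 + (a0 + y) *\<^sub>R ?d2 + (e0 + z) *\<^sub>R ?d3 = x0 + y *\<^sub>R ?d2 + z *\<^sub>R ?d3" for y z
    unfolding x0_def by (simp add: algebra_simps)
  have slope2: "slope s x0 ?d2 = 0"
  proof (rule slope_zero_at_local_max[of "min a0 (1 - a0 - e0)"])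
    fix y :: real assume "\<bar>y\<bar> < min a0 (1 - a0 - e0)"
    then show "phi s (x0 + y *\<^sub>R ?d2) \<le> phi s x0"
      using max[of "a0 + y" "e0 + 0"] int unfolding shift x0_def[symmetric] by (simp add: abs_less_iff)
  qed (use int in simp)
  have slope3: "slope s x0 ?d3 = 0"
  proof (rule slope_zero_at_local_max[of "min e0 (1 - a0 - e0)"])
    fix z :: real assume "\<bar>z\<bar> < min e0 (1 - a0 - e0)"
    then show "phi s (x0 + z *\<^sub>R ?d3) \<le> phi s x0"
      using max[of "a0 + 0" "e0 + z"] int unfolding shift x0_def[symmetric] by (simp add: abs_less_iff)
  qed (use int in simp)
  show ?thesis
  proof (cases "0 < qform ?d2 \<and> 0 < qform ?d2 * qform ?d3 - (bform ?d2 ?d3)^2")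
    case True
    \<comment> \<open>x0 is then the unique critical point of phi s on the plane: the point of the Triangle\<close>
    then have adm: "admissible (Triangle v1 v2 v3)" using V by (simp add: gram_det_def)
    then have "a0 = crit2 v1 v2 v3 s \<and> e0 = crit3 v1 v2 v3 s"
      using crit_coords_iff_slopes_zero[of v1 v2 v3 a0 s e0] slope2 slope3 unfolding x0_def by simp
    then show ?thesis using adm int by (intro exI[of _ "Triangle v1 v2 v3"]) (auto simp: cand_value_def)
  next
    case False
    \<comment> \<open>phi s does not decrease along some line through x0; follow it to the boundary\<close>
    then obtain y z where yz: "(y, z) \<noteq> (0, 0)" and form: "?form y z \<le> 0"
      by (rule binary_form_nonpos_direction)
    obtain t where t: "0 \<le> a0 + t * y" "0 \<le> e0 + t * z" "(a0 + t * y) + (e0 + t * z) \<le> 1"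
      "a0 + t * y = 0 \<or> e0 + t * z = 0 \<or> (a0 + t * y) + (e0 + t * z) = 1"
      by (rule ray_exits_triangle[OF int yz])
    have "?form (t * y) (t * z) = t^2 * ?form y z" by (simp add: algebra_simps power2_eq_square)
    also have "\<dots> \<le> 0" using form by (simp add: mult_nonneg_nonpos)
    finally have "phi s x0 \<le> phi s (v1 + (a0 + t * y) *\<^sub>R ?d2 + (e0 + t * z) *\<^sub>R ?d3)"
      unfolding shift phi_plane slope2 slope3 by simp
    moreover obtain k where "admissible k" "valid k s"
      "phi s (v1 + (a0 + t * y) *\<^sub>R ?d2 + (e0 + t * z) *\<^sub>R ?d3) \<le> cand_value k s"
      using triangle_boundary_dominated[OF V t] by blast
    ultimately show ?thesis unfolding x0_def by (meson order_trans)
  qed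
qed

lemma triangle_dominated:
  assumes V: "v1 \<in> V" "v2 \<in> V" "v3 \<in> V" and x: "x \<in> convex hull {v1, v2, v3}"
  shows "\<exists>k. admissible k \<and> valid k s \<and> phi s x \<le> cand_value k s"
proof -
  have "compact (convex hull {v1, v2, v3})" by (simp add: finite_imp_compact_convex_hull)
  then obtain x0 where x0: "x0 \<in> convex hull {v1, v2, v3}"
    "\<forall>y\<in>convex hull {v1, v2, v3}. phi s y \<le> phi s x0"
    using continuous_attains_sup[OF _ _ continuous_on_phi] x by (metis empty_iff)
  obtain a0 e0 where ae0: "0 \<le> a0" "0 \<le> e0" "a0 + e0 \<le> 1"
    and x0_eq: "x0 = v1 + a0 *\<^sub>R (v2 - v1) + e0 *\<^sub>R (v3 - v1)"
    using x0(1) unfolding convex_hull_3_alt by blast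
  have "\<exists>k. admissible k \<and> valid k s \<and> phi s x0 \<le> cand_value k s"
  proof (cases "a0 = 0 \<or> e0 = 0 \<or> a0 + e0 = 1")
    case True
    then show ?thesis using triangle_boundary_dominated[OF V ae0] x0_eq by metis
  next
    case False
    then have "0 < a0" "0 < e0" "a0 + e0 < 1" using ae0 by auto
    moreover have "phi s (v1 + a *\<^sub>R (v2 - v1) + e *\<^sub>R (v3 - v1)) \<le> phi s x0"
      if "0 \<le> a" "0 \<le> e" "a + e \<le> 1" for a e
      using x0(2) that unfolding convex_hull_3_alt by blast
    ultimately show ?thesis using interior_triangle_max_dominated[OF V] unfolding x0_eq by blast
  qed
  moreover have "phi s x \<le> phi s x0" using x0(2) x by blast
  ultimately show ?thesis by (meson order_trans)
qed

lemma hull_dominated: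
  assumes "x \<in> convex hull V"
  shows "\<exists>k. admissible k \<and> valid k s \<and> phi s x \<le> cand_value k s"
proof -
  obtain S where S: "finite S" "S \<subseteq> V" "card S \<le> DIM(real^2) + 1" "x \<in> convex hull S"
    using assms unfolding caratheodory[of V] by blast
  then have "S \<noteq> {}" "card S \<le> 3" by auto
  then obtain v1 v2 v3 where "S = {v1, v2, v3}"
    using S(1) by (rule nonempty_card_le_3_cases)
  then show ?thesis using triangle_dominated[of v1 v2 v3 x s] S(2,4) by auto
qed

lemma cand_value_le_Triangle:
  "admissible (Triangle v1 v2 v3) \<Longrightarrow> cand_value k s \<le> cand_value (Triangle v1 v2 v3) s"
  using phi_le_cand_value_Triangle unfolding cand_value_def[of k] by blast

lemma sign_split_Edge_minus_phi:
  assumes "0 < qform (w - v)"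
  shows "sign_split (\<lambda>s. cand_value (Edge v w) s - phi s u)"
proof -
  have "sign_split (\<lambda>s. (phi s v - phi s u) + (1 / (4 * qform (w - v))) * (slope s v (w - v))^2)"
    by (intro sign_split_affine_plus_square affine_fun_diff affine_fun_phi affine_fun_slope)
  then show ?thesis by (rule sign_split_cong) (simp add: cand_value_Edge[OF assms])
qed

lemma sign_split_Edge_minus_Edge_crossing:
  assumes q1: "0 < qform (w1 - v1)" and q2: "0 < qform (w2 - v2)"
    and cross: "cross2 (w1 - v1) (w2 - v2) \<noteq> 0"
  shows "sign_split (\<lambda>s. cand_value (Edge v1 w1) s - cand_value (Edge v2 w2) s)"
proof -
  let ?d1 = "w1 - v1" and ?d2 = "w2 - v2"
  \<comment> \<open>the two lines meet at a point p and each value exceeds phi s p by a square,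
    so the difference factors\<close>
  define \<alpha> where "\<alpha> = cross2 (v2 - v1) ?d2 / cross2 ?d1 ?d2"
  define \<beta> where "\<beta> = - cross2 ?d1 (v2 - v1) / cross2 ?d1 ?d2"
  have "v2 - v1 = \<alpha> *\<^sub>R ?d1 - \<beta> *\<^sub>R ?d2"
    using decompose_cross2[OF cross, of "v2 - v1"] unfolding \<alpha>_def \<beta>_def by simp
  then have meet: "v1 + \<alpha> *\<^sub>R ?d1 = v2 + \<beta> *\<^sub>R ?d2" by (simp add: algebra_simps)
  define r1 where "r1 = sqrt (qform ?d1)"
  define r2 where "r2 = sqrt (qform ?d2)"
  have r: "r1^2 = qform ?d1" "r2^2 = qform ?d2" unfolding r1_def r2_def using q1 q2 by simp_all
  define l1 where "l1 s = r1 * (\<alpha> - edge_time v1 w1 s)" for s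
  define l2 where "l2 s = r2 * (\<beta> - edge_time v2 w2 s)" for s
  have "cand_value (Edge v1 w1) s - cand_value (Edge v2 w2) s = (l1 s - l2 s) * (l1 s + l2 s)" for s
    using phi_Edge_line[OF q1, of s \<alpha>] phi_Edge_line[OF q2, of s \<beta>]
    unfolding meet l1_def l2_def r[symmetric] by (simp add: algebra_simps power2_eq_square)
  moreover have "sign_split (\<lambda>s. (l1 s - l2 s) * (l1 s + l2 s))"
    unfolding l1_def l2_def
    by (intro sign_split_affine_mult affine_fun_add affine_fun_diff affine_fun_scale
              affine_fun_edge_time) simp_all
  ultimately show ?thesis by (rule sign_split_cong[rotated])
qed

lemma sign_split_Edge_minus_Edge_parallel:
  assumes q1: "0 < qform (w1 - v1)" and q2: "0 < qform (w2 - v2)"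
    and parallel: "cross2 (w1 - v1) (w2 - v2) = 0"
  shows "sign_split (\<lambda>s. cand_value (Edge v1 w1) s - cand_value (Edge v2 w2) s)"
proof -
  let ?d1 = "w1 - v1" and ?d2 = "w2 - v2"
  define l where "l = (?d2 \<bullet> ?d1) / (?d1 \<bullet> ?d1)"
  have "?d1 \<noteq> 0" using q1 by auto
  then have d2: "?d2 = l *\<^sub>R ?d1" unfolding l_def by (rule parallel_cross2[OF parallel])
  then have "l \<noteq> 0" using q2 by auto
  define \<delta> where "\<delta> = 2 * bform (v2 - v1) ?d1"
  define q where "q = 4 * qform ?d1"
  have "cand_value (Edge v2 w2) s = phi s v2 + (slope s v1 ?d1 - \<delta>)^2 / q" for s
    unfolding cand_value_Edge[OF q2] d2 slope_scale qform_scale q_def \<delta>_def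
      slope_base_change[of s v2 ?d1 v1]
    using \<open>l \<noteq> 0\<close> by (simp add: power_mult_distrib)
  then have "cand_value (Edge v1 w1) s - cand_value (Edge v2 w2) s =
             phi s v1 - phi s v2 + (2 * \<delta> / q) * slope s v1 ?d1 - \<delta>^2 / q" for s
    unfolding cand_value_Edge[OF q1] q_def[symmetric]
    by (simp add: power2_eq_square diff_divide_distrib[symmetric] add_divide_distrib[symmetric]
                  algebra_simps)
  moreover have "sign_split (\<lambda>s. phi s v1 - phi s v2 + (2 * \<delta> / q) * slope s v1 ?d1 - \<delta>^2 / q)"
    by (intro sign_split_affine affine_fun_add affine_fun_diff affine_fun_scale affine_fun_const
              affine_fun_phi affine_fun_slope)
  ultimately show ?thesis by (rule sign_split_cong[rotated])
qed

lemma sign_split_Edge_minus_Edge: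
  "0 < qform (w1 - v1) \<Longrightarrow> 0 < qform (w2 - v2) \<Longrightarrow>
     sign_split (\<lambda>s. cand_value (Edge v1 w1) s - cand_value (Edge v2 w2) s)"
  using sign_split_Edge_minus_Edge_crossing sign_split_Edge_minus_Edge_parallel by blast

lemma sign_split_cand_value_diff:
  assumes i: "admissible i" and j: "admissible j"
  shows "sign_split (\<lambda>s. cand_value i s - cand_value j s)"
proof (cases i)
  case (Triangle v1 v2 v3)
  then show ?thesis using i by (intro sign_split_nonneg) (simp add: cand_value_le_Triangle)
next
  case (Vertex u)
  show ?thesis
  proof (cases j)
    case (Vertex u')
    show ?thesis unfolding \<open>i = Vertex u\<close> Vertex cand_value_def point.simps
      by (intro sign_split_affine affine_fun_diff affine_fun_phi)
  next
    case (Edge v w)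
    then show ?thesis
      using sign_split_uminus[OF sign_split_Edge_minus_phi[of w v u]] j \<open>i = Vertex u\<close>
      by (simp add: cand_value_def[of "Vertex u"])
  next
    case (Triangle v1 v2 v3)
    then show ?thesis using j by (intro sign_split_nonpos) (simp add: cand_value_le_Triangle)
  qed
next
  case (Edge v w)
  show ?thesis
  proof (cases j)
    case (Vertex u)
    then show ?thesis using sign_split_Edge_minus_phi[of w v u] i \<open>i = Edge v w\<close>
      by (simp add: cand_value_def[of "Vertex u"])
  next
    case (Edge v' w')
    then show ?thesis using sign_split_Edge_minus_Edge i j \<open>i = Edge v w\<close> by simp
  next
    case (Triangle v1 v2 v3)
    then show ?thesis using j by (intro sign_split_nonpos) (simp add: cand_value_le_Triangle)
  qed
qed

lemma conjugate_eq_phi_max: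
  assumes "y \<in> P" and "\<forall>x\<in>P. phi s x \<le> phi s y"
  shows "conjugate (\<lambda>x. ereal (quad_fun A b c x) + ind P x) s = ereal (phi s y)"
  unfolding conjugate_def
proof (rule antisym)
  show "(SUP x. ereal (s \<bullet> x) - (ereal (quad_fun A b c x) + ind P x)) \<le> ereal (phi s y)"
    using assms(2) by (intro SUP_least) (auto simp: ind_def phi_def)
  show "ereal (phi s y) \<le> (SUP x. ereal (s \<bullet> x) - (ereal (quad_fun A b c x) + ind P x))"
    using assms(1) by (intro SUP_upper2[of y]) (auto simp: ind_def phi_def)
qed

lemma conjugate_eq_cand_value:
  assumes "admissible m" "valid m s"
    and "\<And>k. admissible k \<Longrightarrow> valid k s \<Longrightarrow> cand_value k s \<le> cand_value m s"
  shows "conjugate (\<lambda>x. ereal (quad_fun A b c x) + ind (convex hull V) x) s = ereal (cand_value m s)"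
  unfolding cand_value_def
proof (rule conjugate_eq_phi_max)
  show "point m s \<in> convex hull V" using assms(1,2) by (rule point_in_hull)
  show "\<forall>x\<in>convex hull V. phi s x \<le> phi s (point m s)"
    using hull_dominated assms(3) unfolding cand_value_def by (meson order_trans)
qed

lemma finite_admissible: "finite {k. admissible k}"
proof -
  have "{k. admissible k} \<subseteq> Vertex ` V \<union> case_prod Edge ` (V \<times> V) \<union>
                             (\<lambda>(v1, v2, v3). Triangle v1 v2 v3) ` (V \<times> V \<times> V)"
  proof
    fix k assume "k \<in> {k. admissible k}"
    then show "k \<in> Vertex ` V \<union> case_prod Edge ` (V \<times> V) \<union>
                   (\<lambda>(v1, v2, v3). Triangle v1 v2 v3) ` (V \<times> V \<times> V)"
      by (cases k) force+
  qed
  then show ?thesis by (rule finite_subset) (simp add: finite_V)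
qed

definition resolving :: "coeffs set \<Rightarrow> bool" where
  "resolving K \<longleftrightarrow>
     (\<forall>i j. admissible i \<longrightarrow> admissible j \<longrightarrow> sign_split_by K (\<lambda>s. cand_value i s - cand_value j s)) \<and>
     (\<forall>k. admissible k \<longrightarrow> (\<forall>h\<in>constraints k. sign_split_by K h))"

lemma resolving_exists: "\<exists>K. finite K \<and> (\<forall>k\<in>K. parabolic_coeffs k) \<and> resolving K"
proof -
  define D where "D = {\<lambda>s. cand_value i s - cand_value j s | i j. admissible i \<and> admissible j}"
  define C where "C = (\<Union>k\<in>{k. admissible k}. constraints k)"
  have "finite (D \<union> C)"
    unfolding D_def C_def using finite_admissible finite_constraints by (simp add: finite_image_set2)
  moreover have "\<forall>h\<in>D. sign_split h" unfolding D_def using sign_split_cand_value_diff by blast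
  moreover have "\<forall>h\<in>C. sign_split h"
    unfolding C_def using sign_split_affine affine_fun_constraint by blast
  ultimately obtain K where K: "finite K" "\<forall>k\<in>K. parabolic_coeffs k" "\<forall>h\<in>D \<union> C. sign_split_by K h"
    using sign_split_family[of "D \<union> C"] by blast
  have "sign_split_by K (\<lambda>s. cand_value i s - cand_value j s)" if "admissible i" "admissible j" for i j
    using K(3) that unfolding D_def by blast
  moreover have "sign_split_by K h" if "admissible k" "h \<in> constraints k" for k h
    using K(3) that unfolding C_def by blast
  ultimately show ?thesis unfolding resolving_def using K(1,2) by blast
qed

context
  fixes K S :: "coeffs set"
  assumes K: "resolving K"
begin

lemma valid_on_sign_cell:
  assumes "admissible k" "s \<in> sign_cell K S" "\<forall>h\<in>constraints k. h s < 0" "s' \<in> sign_cell K S"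
  shows "valid k s'"
  unfolding valid_iff_constraints
proof
  fix h assume "h \<in> constraints k"
  then have "sign_split_by K h" "h s < 0" using K assms(1,3) unfolding resolving_def by blast+
  moreover have "same_side K s s'" using assms(2,4) by (rule same_side_sign_cell)
  ultimately show "h s' \<le> 0" unfolding sign_split_by_def by (meson not_le)
qed

lemma nontriangle_dominated_on_cell:
  assumes "\<not> is_Triangle k" "admissible k" "valid k s" "s \<in> sign_cell K S"
  shows "\<exists>j. admissible j \<and> (\<forall>s'\<in>sign_cell K S. valid j s') \<and> cand_value k s \<le> cand_value j s"
proof (cases k)
  case (Vertex v)
  then show ?thesis using assms(2) by (intro exI[of _ k]) simp
next
  case (Edge v w)
  have "0 \<le> edge_time v w s" "edge_time v w s \<le> 1" using assms(3) Edge by simp_all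
  then consider "edge_time v w s = 0" | "edge_time v w s = 1" | "\<forall>h\<in>constraints k. h s < 0"
    using Edge by fastforce
  then show ?thesis
  proof cases
    case 1
    then show ?thesis using assms(2) Edge by (intro exI[of _ "Vertex v"]) (simp add: cand_value_def)
  next
    case 2
    then show ?thesis using assms(2) Edge by (intro exI[of _ "Vertex w"]) (simp add: cand_value_def)
  next
    case 3
    then show ?thesis using valid_on_sign_cell[OF assms(2,4) 3] assms(2) by blast
  qed
next
  case (Triangle v1 v2 v3)
  then show ?thesis using assms(1) by simp
qed

lemma dominated_on_cell:
  assumes "admissible k" "valid k s" "s \<in> sign_cell K S"
  shows "\<exists>j. admissible j \<and> (\<forall>s'\<in>sign_cell K S. valid j s') \<and> cand_value k s \<le> cand_value j s"
proof (cases "is_Triangle k")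
  case False
  then show ?thesis using nontriangle_dominated_on_cell assms by blast
next
  case True
  then obtain v1 v2 v3 where k: "k = Triangle v1 v2 v3" by (cases k) auto
  let ?a = "crit2 v1 v2 v3 s" and ?e = "crit3 v1 v2 v3 s"
  show ?thesis
  proof (cases "0 < ?a \<and> 0 < ?e \<and> ?a + ?e < 1")
    case True
    then have "\<forall>h\<in>constraints k. h s < 0" using k by auto
    then show ?thesis using valid_on_sign_cell[OF assms(1,3)] assms(1) by blast
  next
    case False
    then have "?a = 0 \<or> ?e = 0 \<or> ?a + ?e = 1" using assms(2) k by auto
    then obtain k' where "\<not> is_Triangle k'" "admissible k'" "valid k' s"
      "cand_value k s \<le> cand_value k' s"
      using triangle_boundary_dominated[of v1 v2 v3 ?a ?e s] assms(1,2) k by (auto simp: cand_value_def)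
    then show ?thesis using nontriangle_dominated_on_cell[OF _ _ _ assms(3)] by (meson order_trans)
  qed
qed

lemma cand_value_order_on_cell:
  assumes "admissible i" "admissible j"
  shows "(\<forall>s\<in>sign_cell K S. cand_value i s \<le> cand_value j s) \<or>
         (\<forall>s\<in>sign_cell K S. cand_value j s \<le> cand_value i s)"
proof (rule ccontr)
  assume "\<not> ?thesis"
  then obtain s1 s2 where s: "s1 \<in> sign_cell K S" "s2 \<in> sign_cell K S"
    "cand_value j s1 - cand_value i s1 < 0" "0 < cand_value j s2 - cand_value i s2"
    by (auto simp: not_le)
  moreover have "sign_split_by K (\<lambda>s. cand_value j s - cand_value i s)"
    using K assms unfolding resolving_def by blast
  ultimately show False using same_side_sign_cell unfolding sign_split_by_def by blast
qed

lemma best_candidate_on_cell: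
  obtains m where "admissible m" "\<forall>s\<in>sign_cell K S. valid m s"
    "\<And>k s. admissible k \<Longrightarrow> valid k s \<Longrightarrow> s \<in> sign_cell K S \<Longrightarrow> cand_value k s \<le> cand_value m s"
proof -
  define J where "J = {k. admissible k \<and> (\<forall>s\<in>sign_cell K S. valid k s)}"
  obtain v0 where "v0 \<in> V" using V_nonempty by blast
  then have "Vertex v0 \<in> J" unfolding J_def by simp
  moreover have "finite J" unfolding J_def by (rule finite_subset[OF _ finite_admissible]) auto
  ultimately have "\<exists>m\<in>J. \<forall>j\<in>J. \<forall>s\<in>sign_cell K S. cand_value j s \<le> cand_value m s"
  proof (intro finite_total_preorder_has_max)
    show "(\<forall>s\<in>sign_cell K S. cand_value i s \<le> cand_value j s) \<or>
          (\<forall>s\<in>sign_cell K S. cand_value j s \<le> cand_value i s)" if "i \<in> J" "j \<in> J" for i j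
      using cand_value_order_on_cell that unfolding J_def by blast
  qed (fastforce intro: order_trans)+
  then obtain m where m: "m \<in> J" "\<forall>j\<in>J. \<forall>s\<in>sign_cell K S. cand_value j s \<le> cand_value m s"
    by blast
  show ?thesis
  proof (rule that)
    show "admissible m" "\<forall>s\<in>sign_cell K S. valid m s" using m(1) unfolding J_def by auto
    fix k s assume "admissible k" "valid k s" "s \<in> sign_cell K S"
    then obtain j where "j \<in> J" "cand_value k s \<le> cand_value j s"
      using dominated_on_cell unfolding J_def by blast
    then show "cand_value k s \<le> cand_value m s" using m(2) \<open>s \<in> sign_cell K S\<close> by (meson order_trans)
  qed
qed

end

theorem admits_parabolic_subdivision_conjugate:
  "admits_parabolic_subdivision (conjugate (\<lambda>x. ereal (quad_fun A b c x) + ind (convex hull V) x))"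
proof -
  obtain K where K: "finite K" "\<forall>k\<in>K. parabolic_coeffs k" "resolving K"
    using resolving_exists by blast
  show ?thesis
  proof (rule admits_parabolic_subdivision_sign_cells[OF K(1,2)])
    fix S
    obtain m where m: "admissible m" "\<forall>s\<in>sign_cell K S. valid m s"
      "\<And>k s. admissible k \<Longrightarrow> valid k s \<Longrightarrow> s \<in> sign_cell K S \<Longrightarrow> cand_value k s \<le> cand_value m s"
      using best_candidate_on_cell[OF K(3)] by blast
    obtain M w k where "\<forall>s. cand_value m s = quad_fun M w k s"
      using conic_fun_imp_quad_fun[OF conic_fun_cand_value[OF m(1)]] by blast
    moreover have
      "conjugate (\<lambda>x. ereal (quad_fun A b c x) + ind (convex hull V) x) s = ereal (cand_value m s)"
      if "s \<in> sign_cell K S" for s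
      using conjugate_eq_cand_value[OF m(1)] m(2,3) that by blast
    ultimately show "\<exists>M w k. \<forall>s\<in>sign_cell K S.
        conjugate (\<lambda>x. ereal (quad_fun A b c x) + ind (convex hull V) x) s = ereal (quad_fun M w k s)"
      by auto
  qed
qed

end

theorem proposition7:
  fixes A :: "real^2^2" and b :: "real^2" and c :: real
    and P :: "(real^2) set" and n :: nat
    and Ps :: "nat \<Rightarrow> (real^2) set" and r :: "nat \<Rightarrow> real^2 \<Rightarrow> real"
  assumes symA: "transpose A = A"
    and polyP: "polytope P" and neP: "P \<noteq> {}"
    and subdiv: "polyhedral_subdivision P n Ps"
    and pieces: "\<forall>j<n. affine_piece (Ps j) (r j) \<or> quadratic_piece (Ps j) (r j)
                        \<or> rational_piece (Ps j) (r j)"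
    and env: "convex_envelope (\<lambda>x. ereal (quad_fun A b c x) + ind P x)
              = (\<lambda>x. INF j\<in>{..<n}. ereal (r j x) + ind (Ps j) x)"
  shows "admits_parabolic_subdivision
           (\<lambda>s. SUP j\<in>{..<n}. conjugate (\<lambda>x. ereal (r j x) + ind (Ps j) x) s)"
proof -
  obtain V where V: "finite V" "P = convex hull V" using polyP unfolding polytope_def by blast
  interpret quadratic_on_polytope A b c V using symA V neP by unfold_locales auto
  \<comment> \<open>Conjugation cannot tell the envelope from q + I_P.\<close>
  have "(\<lambda>s. SUP j\<in>{..<n}. conjugate (\<lambda>x. ereal (r j x) + ind (Ps j) x) s)
        = conjugate (\<lambda>x. INF j\<in>{..<n}. ereal (r j x) + ind (Ps j) x)"
    by (rule conjugate_INF[symmetric])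
  also have "\<dots> = conjugate (\<lambda>x. ereal (quad_fun A b c x) + ind (convex hull V) x)"
    unfolding env[symmetric] conjugate_convex_envelope V(2) ..
  finally show ?thesis using admits_parabolic_subdivision_conjugate by simp
qed

end
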